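(* Assume (R). Then for all integers $r,s\ge0$, $$(-1)^rA_{r,s}(x)=(-1)^sA_{s,r}(-x).$$
   Context: Let $(\alpha_n)_{n\ge0}$ be an arbitrary sequence of complex numbers; its Appell polynomials are $A_n(x)=\sum_{\nu=0}^{n}\binom{n}{\nu}\alpha_{n-\nu}x^\nu$. For $r,s\ge0$ define $A_{r,s}(x)=\sum_{\nu=0}^{r}\binom{r}{\nu}A_{s+\nu}(x)$ (umbrally $(A(x)+1)^rA(x)^s$). Property (R) means $A_n(1-x)=(-1)^nA_n(x)$ for all $n\ge0$. *)

theory Defs
  imports Complex_Main
begin

definition appell :: "(nat \<Rightarrow> complex) \<Rightarrow> nat \<Rightarrow> complex \<Rightarrow> complex" where
  "appell \<alpha> n x = (\<Sum>\<nu>=0..n. of_nat (n choose \<nu>) * \<alpha> (n - \<nu>) * x ^ \<nu>)"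

definition appell2 :: "(nat \<Rightarrow> complex) \<Rightarrow> nat \<Rightarrow> nat \<Rightarrow> complex \<Rightarrow> complex" where
  "appell2 \<alpha> r s x = (\<Sum>\<nu>=0..r. of_nat (r choose \<nu>) * appell \<alpha> (s + \<nu>) x)"

definition propR :: "(nat \<Rightarrow> complex) \<Rightarrow> bool" where
  "propR \<alpha> \<longleftrightarrow> (\<forall>n x. appell \<alpha> n (1 - x) = (-1) ^ n * appell \<alpha> n x)"

end

theory Submission
  imports Defs "HOL-Computational_Algebra.Formal_Power_Series"
begin

(* The exponential generating function of A_n(x) is e^(xt) a(t), so multiplying by e^t gives
   A_n(x+1) = sum_i (n choose i) A_i(x), i.e. A_{r,0}(x) = A_r(x+1); under (R) this is
   (-1)^r A_r(-x), which is the case r = 0 of the identity (with r and s swapped).  Both sides of the identity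
   satisfy the Pascal recurrence A_{r+1,s} = A_{r,s} + A_{r,s+1} in the appropriate variable,
   so induction on r finishes the proof. *)

definition appell_egf :: "(nat \<Rightarrow> complex) \<Rightarrow> complex fps" where
  "appell_egf \<alpha> = Abs_fps (\<lambda>k. \<alpha> k / fact k)"

lemma appell_eq_fps_nth: "appell \<alpha> n x = fact n * fps_nth (fps_exp x * appell_egf \<alpha>) n"
proof -
  have "fact n * fps_nth (fps_exp x * appell_egf \<alpha>) n
      = (\<Sum>i=0..n. fact n * (x ^ i / fact i * (\<alpha> (n - i) / fact (n - i))))"
    by (simp add: fps_mult_nth appell_egf_def sum_distrib_left)
  also have "\<dots> = (\<Sum>i=0..n. of_nat (n choose i) * \<alpha> (n - i) * x ^ i)"
    by (rule sum.cong) (simp_all add: binomial_fact)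
  finally show ?thesis by (simp add: appell_def)
qed

lemma appell_plus_1: "appell \<alpha> n (x + 1) = (\<Sum>i=0..n. of_nat (n choose i) * appell \<alpha> i x)"
proof -
  have "appell \<alpha> n (x + 1) = fact n * fps_nth ((fps_exp x * appell_egf \<alpha>) * fps_exp 1) n"
    by (simp add: appell_eq_fps_nth fps_exp_add_mult mult_ac)
  also have "\<dots> = (\<Sum>i=0..n. fact n * (fps_nth (fps_exp x * appell_egf \<alpha>) i / fact (n - i)))"
    by (simp add: fps_mult_nth sum_distrib_left)
  also have "\<dots> = (\<Sum>i=0..n. of_nat (n choose i) * appell \<alpha> i x)"
    by (rule sum.cong) (simp_all add: appell_eq_fps_nth binomial_fact)
  finally show ?thesis .
qed

lemma appell2_0_eq_appell_plus_1: "appell2 \<alpha> r 0 x = appell \<alpha> r (x + 1)"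
  by (simp add: appell2_def appell_plus_1)

lemma binomial_sum_Suc_pascal:
  fixes f :: "nat \<Rightarrow> 'a :: comm_semiring_1"
  shows "(\<Sum>\<nu>=0..Suc r. of_nat (Suc r choose \<nu>) * f (s + \<nu>))
       = (\<Sum>\<nu>=0..r. of_nat (r choose \<nu>) * f (s + \<nu>))
       + (\<Sum>\<nu>=0..r. of_nat (r choose \<nu>) * f (Suc s + \<nu>))"
proof -
  have "(\<Sum>\<nu>=0..r. of_nat (r choose \<nu>) * f (s + \<nu>))
      = (\<Sum>\<nu>=0..Suc r. of_nat (r choose \<nu>) * f (s + \<nu>))"
    by (simp add: binomial_eq_0)
  also have "\<dots> = f s + (\<Sum>\<nu>=0..r. of_nat (r choose Suc \<nu>) * f (Suc s + \<nu>))"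
    by (subst sum.atLeast0_atMost_Suc_shift) simp
  finally have shift: "(\<Sum>\<nu>=0..r. of_nat (r choose \<nu>) * f (s + \<nu>))
      = f s + (\<Sum>\<nu>=0..r. of_nat (r choose Suc \<nu>) * f (Suc s + \<nu>))" .
  have "(\<Sum>\<nu>=0..Suc r. of_nat (Suc r choose \<nu>) * f (s + \<nu>))
      = f s + (\<Sum>\<nu>=0..r. of_nat (r choose \<nu>) * f (Suc s + \<nu>))
            + (\<Sum>\<nu>=0..r. of_nat (r choose Suc \<nu>) * f (Suc s + \<nu>))"
    by (subst sum.atLeast0_atMost_Suc_shift) (simp add: distrib_right sum.distrib add.assoc)
  then show ?thesis
    unfolding shift by (simp add: add_ac)
qed

lemma appell2_Suc: "appell2 \<alpha> (Suc r) s x = appell2 \<alpha> r s x + appell2 \<alpha> r (Suc s) x"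
  unfolding appell2_def by (rule binomial_sum_Suc_pascal)

theorem mainTheorem7:
  fixes \<alpha> :: "nat \<Rightarrow> complex" and r s :: nat and x :: complex
  assumes "propR \<alpha>"
  shows "(-1) ^ r * appell2 \<alpha> r s x = (-1) ^ s * appell2 \<alpha> s r (- x)"
proof (induction r arbitrary: s)
  case 0
  have "(-1) ^ s * appell2 \<alpha> s 0 (- x) = (-1) ^ s * appell \<alpha> s (1 - x)"
    by (simp add: appell2_0_eq_appell_plus_1)
  also have "\<dots> = ((-1) ^ s * (-1) ^ s) * appell \<alpha> s x"
    using assms by (simp add: propR_def)
  also have "\<dots> = appell2 \<alpha> 0 s x"
    by (simp add: appell2_def flip: power_add)
  finally show ?case by simp
next
  case (Suc r)
  have "(-1) ^ Suc r * appell2 \<alpha> (Suc r) s x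
     = - ((-1) ^ r * appell2 \<alpha> r s x) - (-1) ^ r * appell2 \<alpha> r (Suc s) x"
    by (simp add: appell2_Suc algebra_simps)
  also have "\<dots> = - ((-1) ^ s * appell2 \<alpha> s r (- x)) - (-1) ^ Suc s * appell2 \<alpha> (Suc s) r (- x)"
    using Suc.IH[of s] Suc.IH[of "Suc s"] by simp
  also have "\<dots> = (-1) ^ s * appell2 \<alpha> s (Suc r) (- x)"
    by (simp add: appell2_Suc algebra_simps)
  finally show ?case .
qed

end
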